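(* Let $M$ be a partial $H$-module with partial action $h\otimes m\mapsto h\cdot m$, and let $N$ be a left $H$-module with action $h\otimes n\mapsto hn$. Then $M\otimes N$ is a partial $H$-module via $$h\cdot(m\otimes n)=h_{(1)}\cdot m\otimes h_{(2)}n.$$
   Context: Throughout, $k$ is a field and $H$ is a Hopf algebra over $k$ with bijective antipode $S$ and Sweedler notation $\Delta(h)=h_{(1)}\otimes h_{(2)}$. A partial $H$-module is a vector space $M$ with a linear map $\pi:H\to\mathrm{End}_k(M)$, written $h\cdot m=\pi(h)(m)$, satisfying, for all $h,k\in H$: - $\pi(1_H)=\mathrm{id}$; - $\pi(h)\pi(k_{(1)})\pi(S(k_{(2)}))=\pi(hk_{(1)})\pi(S(k_{(2)}))$; - $\pi(h_{(1)})\pi(S(h_{(2)}))\pi(k)=\pi(h_{(1)})\pi(S(h_{(2)})k)$; - $\pi(h)\pi(S(k_{(1)}))\pi(k_{(2)})=\pi(hS(k_{(1)}))\pi(k_{(2)})$; - $\pi(S(h_{(1)}))\pi(h_{(2)})\pi(k)=\pi(S(h_{(1)}))\pi(h_{(2)}k)$. *)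

theory Defs
  imports Complex_Main
begin

text \<open>An element of A \<otimes>_k B is represented by a formal sum of simple tensors, i.e. a list of
pairs; two lists represent the same tensor iff they are related by the smallest
congruence of the free commutative monoid on A \<times> B making the tensor bilinear and
balanced over k. (Every generator has an additive inverse, so the quotient is the
usual k-tensor product.)\<close>

inductive tens_rel :: "('k::field \<Rightarrow> 'a::ab_group_add \<Rightarrow> 'a) \<Rightarrow> ('k \<Rightarrow> 'b::ab_group_add \<Rightarrow> 'b)
    \<Rightarrow> ('a \<times> 'b) list \<Rightarrow> ('a \<times> 'b) list \<Rightarrow> bool"
  for sa sb where
  tr_refl: "tens_rel sa sb xs xs"
| tr_sym: "tens_rel sa sb xs ys \<Longrightarrow> tens_rel sa sb ys xs"
| tr_trans: "tens_rel sa sb xs ys \<Longrightarrow> tens_rel sa sb ys zs \<Longrightarrow> tens_rel sa sb xs zs"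
| tr_app: "tens_rel sa sb xs ys \<Longrightarrow> tens_rel sa sb us vs \<Longrightarrow> tens_rel sa sb (xs @ us) (ys @ vs)"
| tr_swap: "tens_rel sa sb [x, y] [y, x]"
| tr_addL: "tens_rel sa sb [(a + a', b)] [(a, b), (a', b)]"
| tr_addR: "tens_rel sa sb [(a, b + b')] [(a, b), (a, b')]"
| tr_zero: "tens_rel sa sb [(0, b)] []"
| tr_scal: "tens_rel sa sb [(sa c a, b)] [(a, sb c b)]"

inductive tens3_rel :: "('k::field \<Rightarrow> 'a::ab_group_add \<Rightarrow> 'a) \<Rightarrow> ('k \<Rightarrow> 'b::ab_group_add \<Rightarrow> 'b)
    \<Rightarrow> ('k \<Rightarrow> 'c::ab_group_add \<Rightarrow> 'c)
    \<Rightarrow> ('a \<times> 'b \<times> 'c) list \<Rightarrow> ('a \<times> 'b \<times> 'c) list \<Rightarrow> bool"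
  for sa sb sc where
  t3_refl: "tens3_rel sa sb sc xs xs"
| t3_sym: "tens3_rel sa sb sc xs ys \<Longrightarrow> tens3_rel sa sb sc ys xs"
| t3_trans: "tens3_rel sa sb sc xs ys \<Longrightarrow> tens3_rel sa sb sc ys zs \<Longrightarrow> tens3_rel sa sb sc xs zs"
| t3_app: "tens3_rel sa sb sc xs ys \<Longrightarrow> tens3_rel sa sb sc us vs \<Longrightarrow>
           tens3_rel sa sb sc (xs @ us) (ys @ vs)"
| t3_swap: "tens3_rel sa sb sc [x, y] [y, x]"
| t3_add1: "tens3_rel sa sb sc [(a + a', b, c)] [(a, b, c), (a', b, c)]"
| t3_add2: "tens3_rel sa sb sc [(a, b + b', c)] [(a, b, c), (a, b', c)]"
| t3_add3: "tens3_rel sa sb sc [(a, b, c + c')] [(a, b, c), (a, b, c')]"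
| t3_zero: "tens3_rel sa sb sc [(0, b, c)] []"
| t3_scal2: "tens3_rel sa sb sc [(sa r a, b, c)] [(a, sb r b, c)]"
| t3_scal3: "tens3_rel sa sb sc [(sa r a, b, c)] [(a, b, sc r c)]"

definition tens_scale :: "('k \<Rightarrow> 'a \<Rightarrow> 'a) \<Rightarrow> 'k \<Rightarrow> ('a \<times> 'b) list \<Rightarrow> ('a \<times> 'b) list" where
  "tens_scale sa c xs = map (\<lambda>(a, b). (sa c a, b)) xs"

text \<open>The comultiplication is given in Sweedler form:
delta h is a formal sum representing \<Delta>(h) = h_(1) \<otimes> h_(2) in H \<otimes> H.\<close>

definition hopf_algebra ::
  "('k::field \<Rightarrow> 'h::ring_1 \<Rightarrow> 'h) \<Rightarrow> ('h \<Rightarrow> ('h \<times> 'h) list) \<Rightarrow> ('h \<Rightarrow> 'k) \<Rightarrow> ('h \<Rightarrow> 'h) \<Rightarrow> bool"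
  where
  "hopf_algebra scH delta eps S \<longleftrightarrow>
     \<comment> \<open>k-algebra\<close>
     vector_space scH \<and>
     (\<forall>c a b. scH c (a * b) = scH c a * b \<and> scH c (a * b) = a * scH c b) \<and>
     \<comment> \<open>\<Delta> is k-linear\<close>
     (\<forall>a b. tens_rel scH scH (delta (a + b)) (delta a @ delta b)) \<and>
     (\<forall>c a. tens_rel scH scH (delta (scH c a)) (tens_scale scH c (delta a))) \<and>
     \<comment> \<open>coassociativity\<close>
     (\<forall>h. tens3_rel scH scH scH
            (concat (map (\<lambda>(a, b). map (\<lambda>(a1, a2). (a1, a2, b)) (delta a)) (delta h)))
            (concat (map (\<lambda>(a, b). map (\<lambda>(b1, b2). (a, b1, b2)) (delta b)) (delta h)))) \<and>
     \<comment> \<open>\<epsilon> is k-linear\<close>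
     (\<forall>a b. eps (a + b) = eps a + eps b) \<and> (\<forall>c a. eps (scH c a) = c * eps a) \<and>
     \<comment> \<open>counit\<close>
     (\<forall>h. sum_list (map (\<lambda>(a, b). scH (eps a) b) (delta h)) = h) \<and>
     (\<forall>h. sum_list (map (\<lambda>(a, b). scH (eps b) a) (delta h)) = h) \<and>
     \<comment> \<open>\<Delta> and \<epsilon> are algebra maps\<close>
     tens_rel scH scH (delta 1) [(1, 1)] \<and>
     (\<forall>g h. tens_rel scH scH (delta (g * h))
        (concat (map (\<lambda>(a, b). map (\<lambda>(c, d). (a * c, b * d)) (delta h)) (delta g)))) \<and>
     eps 1 = 1 \<and> (\<forall>g h. eps (g * h) = eps g * eps h) \<and>
     \<comment> \<open>antipode: k-linear, convolution inverse of the identity\<close>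
     (\<forall>a b. S (a + b) = S a + S b) \<and> (\<forall>c a. S (scH c a) = scH c (S a)) \<and>
     (\<forall>h. sum_list (map (\<lambda>(a, b). S a * b) (delta h)) = scH (eps h) 1) \<and>
     (\<forall>h. sum_list (map (\<lambda>(a, b). a * S b) (delta h)) = scH (eps h) 1)"

definition left_module ::
  "('k::field \<Rightarrow> 'h::ring_1 \<Rightarrow> 'h) \<Rightarrow> ('k \<Rightarrow> 'n::ab_group_add \<Rightarrow> 'n) \<Rightarrow> ('h \<Rightarrow> 'n \<Rightarrow> 'n) \<Rightarrow> bool"
  where
  "left_module scH scN act \<longleftrightarrow>
     vector_space scN \<and>
     (\<forall>a b n. act (a + b) n = act a n + act b n) \<and>
     (\<forall>c a n. act (scH c a) n = scN c (act a n)) \<and>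
     (\<forall>h n n'. act h (n + n') = act h n + act h n') \<and>
     (\<forall>h c n. act h (scN c n) = scN c (act h n)) \<and>
     (\<forall>n. act 1 n = n) \<and>
     (\<forall>a b n. act (a * b) n = act a (act b n))"

text \<open>Stated generically for a vector space presented as a type 'v with addition add,
zero z, scalar multiplication sc and an equivalence eqv identifying equal vectors
(eqv is (=) for an honest type; it is tens_rel for formal tensor sums).
pa h is the operator \<pa>(h); the Sweedler sums over \<Delta>(k) are sums over delta k.\<close>

definition vsum :: "('v \<Rightarrow> 'v \<Rightarrow> 'v) \<Rightarrow> 'v \<Rightarrow> 'v list \<Rightarrow> 'v" where
  "vsum add z xs = foldr add xs z"

definition partial_module ::
  "('k::field \<Rightarrow> 'h::ring_1 \<Rightarrow> 'h) \<Rightarrow> ('h \<Rightarrow> ('h \<times> 'h) list) \<Rightarrow> ('h \<Rightarrow> 'h)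
   \<Rightarrow> ('v \<Rightarrow> 'v \<Rightarrow> 'v) \<Rightarrow> 'v \<Rightarrow> ('k \<Rightarrow> 'v \<Rightarrow> 'v) \<Rightarrow> ('v \<Rightarrow> 'v \<Rightarrow> bool)
   \<Rightarrow> ('h \<Rightarrow> 'v \<Rightarrow> 'v) \<Rightarrow> bool"
  where
  "partial_module scH delta S add z sc eqv pa \<longleftrightarrow>
     \<comment> \<open>each \<pa>(h) is a well-defined k-linear endomorphism\<close>
     (\<forall>h x y. eqv x y \<longrightarrow> eqv (pa h x) (pa h y)) \<and>
     (\<forall>h x y. eqv (pa h (add x y)) (add (pa h x) (pa h y))) \<and>
     (\<forall>h c x. eqv (pa h (sc c x)) (sc c (pa h x))) \<and>
     \<comment> \<open>\<pa> : H \<rightarrow> End(V) is k-linear\<close>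
     (\<forall>a b x. eqv (pa (a + b) x) (add (pa a x) (pa b x))) \<and>
     (\<forall>c a x. eqv (pa (scH c a) x) (sc c (pa a x))) \<and>
     \<comment> \<open>\<pa>(1) = id\<close>
     (\<forall>x. eqv (pa 1 x) x) \<and>
     \<comment> \<open>\<pa>(h)\<pa>(k1)\<pa>(S k2) = \<pa>(h k1)\<pa>(S k2)\<close>
     (\<forall>h k x. eqv (vsum add z (map (\<lambda>(a, b). pa h (pa a (pa (S b) x))) (delta k)))
                  (vsum add z (map (\<lambda>(a, b). pa (h * a) (pa (S b) x)) (delta k)))) \<and>
     \<comment> \<open>\<pa>(h1)\<pa>(S h2)\<pa>(k) = \<pa>(h1)\<pa>(S(h2) k)\<close>
     (\<forall>h k x. eqv (vsum add z (map (\<lambda>(a, b). pa a (pa (S b) (pa k x))) (delta h)))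
                  (vsum add z (map (\<lambda>(a, b). pa a (pa (S b * k) x)) (delta h)))) \<and>
     \<comment> \<open>\<pa>(h)\<pa>(S k1)\<pa>(k2) = \<pa>(h S(k1))\<pa>(k2)\<close>
     (\<forall>h k x. eqv (vsum add z (map (\<lambda>(a, b). pa h (pa (S a) (pa b x))) (delta k)))
                  (vsum add z (map (\<lambda>(a, b). pa (h * S a) (pa b x)) (delta k)))) \<and>
     \<comment> \<open>\<pa>(S h1)\<pa>(h2)\<pa>(k) = \<pa>(S h1)\<pa>(h2 k)\<close>
     (\<forall>h k x. eqv (vsum add z (map (\<lambda>(a, b). pa (S a) (pa b (pa k x))) (delta h)))
                  (vsum add z (map (\<lambda>(a, b). pa (S a) (pa (b * k) x)) (delta h))))"

definition tens_act ::
  "('h \<Rightarrow> ('h \<times> 'h) list) \<Rightarrow> ('h \<Rightarrow> 'm \<Rightarrow> 'm) \<Rightarrow> ('h \<Rightarrow> 'n \<Rightarrow> 'n)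
   \<Rightarrow> 'h \<Rightarrow> ('m \<times> 'n) list \<Rightarrow> ('m \<times> 'n) list" where
  "tens_act delta pa act h xs =
     concat (map (\<lambda>(m, n). map (\<lambda>(a, b). (pa a m, act b n)) (delta h)) xs)"

end

theory Submission
  imports Defs
begin

text \<open>Evaluate both sides of each partial-module identity of \<open>M \<otimes> N\<close> on a simple tensor
  \<open>m \<otimes> n\<close>. Multiplicativity of \<open>\<Delta>\<close> and \<open>\<Delta>(S h) = S(h\<^sub>2) \<otimes> S(h\<^sub>1)\<close> turn each side into an
  iterated Sweedler sum whose \<open>M\<close>-leg involves only the partial action and whose \<open>N\<close>-leg only the
  genuine action, which can be rewritten freely. For the two identities with \<open>\<pi>(S k\<^sub>2)\<close> applied
  after \<open>\<pi>(k\<^sub>1)\<close>, the \<open>N\<close>-leg carries a factor \<open>k\<^sub>2 S(k\<^sub>3)\<close>, which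
  \<open>k\<^sub>1 \<otimes> k\<^sub>2 S(k\<^sub>3) \<otimes> k\<^sub>4 = k\<^sub>1 \<otimes> 1 \<otimes> k\<^sub>2\<close> removes; for the other two, coassociativity alone
  isolates the inner legs. Either way the \<open>M\<close>-leg of both sides becomes the two sides of the
  corresponding identity of \<open>M\<close>. As tensors are formal sums modulo \<open>tens_rel\<close>, each rewrite under
  a Sweedler sum needs the summand to be \<open>k\<close>-linear in every Sweedler leg.\<close>

section \<open>Formal tensor sums\<close>

lemma concat_concat: "concat (concat xss) = concat (map concat xss)"
  by (induction xss) auto

lemma tens_rel_append_left: "tens_rel sa sb xs ys \<Longrightarrow> tens_rel sa sb (us @ xs) (us @ ys)"
  using tr_app tr_refl by blast

lemma tens_rel_append_right: "tens_rel sa sb xs ys \<Longrightarrow> tens_rel sa sb (xs @ us) (ys @ us)"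
  using tr_app tr_refl by blast

lemma tens_rel_Cons_snoc: "tens_rel sa sb (x # ys) (ys @ [x])"
proof (induction ys)
  case Nil then show ?case by (simp add: tr_refl)
next
  case (Cons y ys)
  have "tens_rel sa sb ([x, y] @ ys) ([y, x] @ ys)" by (rule tens_rel_append_right[OF tr_swap])
  moreover have "tens_rel sa sb ([y] @ (x # ys)) ([y] @ (ys @ [x]))"
    by (rule tens_rel_append_left[OF Cons])
  ultimately show ?case using tr_trans by fastforce
qed

lemma tens_rel_append_commute: "tens_rel sa sb (xs @ ys) (ys @ xs)"
proof (induction xs)
  case Nil then show ?case by (simp add: tr_refl)
next
  case (Cons x xs)
  have "tens_rel sa sb ([x] @ (xs @ ys)) ([x] @ (ys @ xs))" by (rule tens_rel_append_left[OF Cons])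
  moreover have "tens_rel sa sb (x # (ys @ xs)) ((ys @ xs) @ [x])" by (rule tens_rel_Cons_snoc)
  moreover have "tens_rel sa sb (ys @ (xs @ [x])) (ys @ (x # xs))"
    by (rule tens_rel_append_left[OF tr_sym[OF tens_rel_Cons_snoc]])
  ultimately show ?case by (metis tr_trans append_Cons append_Nil append_assoc)
qed

lemma tens_rel_concat_map_cong:
  "(\<And>x. x \<in> set xs \<Longrightarrow> tens_rel sa sb (f x) (g x)) \<Longrightarrow>
   tens_rel sa sb (concat (map f xs)) (concat (map g xs))"
  by (induction xs) (auto intro: tr_refl tr_app)

lemma tens_rel_concat_map_append:
  "tens_rel sa sb (concat (map (\<lambda>x. f x @ g x) xs)) (concat (map f xs) @ concat (map g xs))"
proof (induction xs)
  case Nil then show ?case by (simp add: tr_refl)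
next
  case (Cons x xs)
  let ?F = "concat (map f xs)" and ?G = "concat (map g xs)"
  have "tens_rel sa sb ((f x @ g x) @ concat (map (\<lambda>x. f x @ g x) xs)) ((f x @ g x) @ (?F @ ?G))"
    by (rule tens_rel_append_left[OF Cons])
  moreover have "tens_rel sa sb (f x @ (g x @ ?F) @ ?G) (f x @ (?F @ g x) @ ?G)"
    by (intro tens_rel_append_left tens_rel_append_right tens_rel_append_commute)
  ultimately show ?case using tr_trans by fastforce
qed

lemma tens_rel_concat_map_swap:
  "tens_rel sa sb (concat (map (\<lambda>x. concat (map (\<lambda>y. f x y) ys)) xs))
                  (concat (map (\<lambda>y. concat (map (\<lambda>x. f x y) xs)) ys))"
proof (induction xs)
  case Nil then show ?case by (induction ys) (auto intro: tr_refl)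
next
  case (Cons x xs)
  have "tens_rel sa sb (concat (map (f x) ys) @ concat (map (\<lambda>x. concat (map (f x) ys)) xs))
          (concat (map (f x) ys) @ concat (map (\<lambda>y. concat (map (\<lambda>x. f x y) xs)) ys))"
    by (rule tens_rel_append_left[OF Cons])
  moreover have "tens_rel sa sb
      (concat (map (f x) ys) @ concat (map (\<lambda>y. concat (map (\<lambda>x. f x y) xs)) ys))
      (concat (map (\<lambda>y. f x y @ concat (map (\<lambda>x. f x y) xs)) ys))"
    by (rule tr_sym, rule tens_rel_concat_map_append)
  ultimately show ?case using tr_trans by fastforce
qed

lemma tens_rel_collect_left:
  "tens_rel sa sb (concat (map (\<lambda>p. [(f p, n)]) l)) [(foldr (+) (map f l) 0, n)]"
proof (induction l)
  case Nil then show ?case by (simp add: tr_sym tr_zero)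
next
  case (Cons p l)
  have "tens_rel sa sb ([(f p, n)] @ concat (map (\<lambda>p. [(f p, n)]) l))
                       ([(f p, n)] @ [(foldr (+) (map f l) 0, n)])"
    by (rule tens_rel_append_left[OF Cons])
  then show ?case using tr_trans tr_sym[OF tr_addL] by fastforce
qed

lemma tens_rel_bilinear_map:
  assumes "tens_rel sa sb u v"
    and "\<And>a a' b. tens_rel sc sd (g (a + a') b) (g a b @ g a' b)"
    and "\<And>a b b'. tens_rel sc sd (g a (b + b')) (g a b @ g a b')"
    and "\<And>b. tens_rel sc sd (g 0 b) []"
    and "\<And>c a b. tens_rel sc sd (g (sa c a) b) (g a (sb c b))"
  shows "tens_rel sc sd (concat (map (\<lambda>(a, b). g a b) u)) (concat (map (\<lambda>(a, b). g a b) v))"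
  using assms(1)
proof (induction rule: tens_rel.induct)
  case (tr_swap x y) then show ?case by (cases x; cases y) (simp add: tens_rel_append_commute)
qed (auto intro: tr_refl tr_sym tr_trans tr_app assms(2-5))

lemma tens3_rel_trilinear_map:
  assumes "tens3_rel sa sb se u v"
    and "\<And>a a' b e. tens_rel sc sd (g (a + a') b e) (g a b e @ g a' b e)"
    and "\<And>a b b' e. tens_rel sc sd (g a (b + b') e) (g a b e @ g a b' e)"
    and "\<And>a b e e'. tens_rel sc sd (g a b (e + e')) (g a b e @ g a b e')"
    and "\<And>b e. tens_rel sc sd (g 0 b e) []"
    and "\<And>c a b e. tens_rel sc sd (g (sa c a) b e) (g a (sb c b) e)"
    and "\<And>c a b e. tens_rel sc sd (g (sa c a) b e) (g a b (se c e))"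
  shows "tens_rel sc sd (concat (map (\<lambda>(a, b, e). g a b e) u))
                        (concat (map (\<lambda>(a, b, e). g a b e) v))"
  using assms(1)
proof (induction rule: tens3_rel.induct)
  case (t3_swap x y) then show ?case by (cases x; cases y) (simp add: tens_rel_append_commute)
qed (auto intro: tr_refl tr_sym tr_trans tr_app assms(2-7))

section \<open>Sweedler sums\<close>

locale hopf_tensor_target =
  fixes scH :: "'k::field \<Rightarrow> 'h::ring_1 \<Rightarrow> 'h"
    and delta :: "'h \<Rightarrow> ('h \<times> 'h) list"
    and eps :: "'h \<Rightarrow> 'k"
    and S :: "'h \<Rightarrow> 'h"
    and scM :: "'k \<Rightarrow> 'm::ab_group_add \<Rightarrow> 'm"
    and scN :: "'k \<Rightarrow> 'n::ab_group_add \<Rightarrow> 'n"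
  assumes hopf: "hopf_algebra scH delta eps S"
    and vector_space_M: "vector_space scM"
begin

abbreviation tens_eq :: "('m \<times> 'n) list \<Rightarrow> ('m \<times> 'n) list \<Rightarrow> bool" (infix "\<simeq>" 50)
  where "xs \<simeq> ys \<equiv> tens_rel scM scN xs ys"

lemma tens_eq_trans [trans]: "xs \<simeq> ys \<Longrightarrow> ys \<simeq> zs \<Longrightarrow> xs \<simeq> zs"
  by (rule tr_trans)

lemma scH_mult_left: "scH c (a * b) = scH c a * b"
  and scH_mult_right: "scH c (a * b) = a * scH c b"
  and delta_add: "tens_rel scH scH (delta (a + b)) (delta a @ delta b)"
  and delta_scale: "tens_rel scH scH (delta (scH c a)) (tens_scale scH c (delta a))"
  and delta_coassoc: "tens3_rel scH scH scH
            (concat (map (\<lambda>(a, b). map (\<lambda>(a1, a2). (a1, a2, b)) (delta a)) (delta h)))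
            (concat (map (\<lambda>(a, b). map (\<lambda>(b1, b2). (a, b1, b2)) (delta b)) (delta h)))"
  and counit_left: "sum_list (map (\<lambda>(a, b). scH (eps a) b) (delta h)) = h"
  and counit_right: "sum_list (map (\<lambda>(a, b). scH (eps b) a) (delta h)) = h"
  and delta_one: "tens_rel scH scH (delta 1) [(1, 1)]"
  and delta_mult: "tens_rel scH scH (delta (g * h))
        (concat (map (\<lambda>(a, b). map (\<lambda>(c, d). (a * c, b * d)) (delta h)) (delta g)))"
  and antipode_add: "S (a + b) = S a + S b"
  and antipode_scale: "S (scH c a) = scH c (S a)"
  and antipode_left: "sum_list (map (\<lambda>(a, b). S a * b) (delta h)) = scH (eps h) 1"
  and antipode_right: "sum_list (map (\<lambda>(a, b). a * S b) (delta h)) = scH (eps h) 1"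
  using hopf unfolding hopf_algebra_def by (elim conjE; fast)+

lemma scH_zero_left: "scH 0 x = 0"
proof -
  have "vector_space scH" using hopf unfolding hopf_algebra_def by blast
  then show ?thesis by (simp add: module.scale_zero_left vector_space_def module_def)
qed

lemma module_M: "module scM"
  using vector_space_M by (simp add: vector_space_def module_def)

lemma scM_zero_left: "scM 0 x = 0"
  and scM_zero_right: "scM c 0 = 0"
  and scM_add_right: "scM c (x + y) = scM c x + scM c y"
  and scM_scM: "scM c (scM d x) = scM (c * d) x"
  by (rule module.scale_zero_left module.scale_zero_right module.scale_right_distrib
      module.scale_scale, rule module_M)+

lemma tens_scale_cong: "xs \<simeq> ys \<Longrightarrow> tens_scale scM c xs \<simeq> tens_scale scM c ys"
proof (induction rule: tens_rel.induct)
  case (tr_scal c' a b)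
  have "scM c (scM c' a) = scM c' (scM c a)" by (simp add: scM_scM mult.commute)
  then show ?case by (simp add: tens_scale_def) (rule tr_scal)
qed (auto simp: tens_scale_def scM_add_right scM_zero_right intro: tens_rel.intros)

lemma tens_scale_concat: "tens_scale sc c (concat L) = concat (map (tens_scale sc c) L)"
  by (induction L) (simp_all add: tens_scale_def)

lemma tens_scale_zero: "tens_scale scM 0 xs \<simeq> []"
proof (induction xs)
  case Nil then show ?case by (simp add: tens_scale_def tr_refl)
next
  case (Cons x xs)
  have "[(0, snd x)] @ tens_scale scM 0 xs \<simeq> [] @ []" by (rule tr_app[OF tr_zero Cons])
  then show ?case by (cases x) (simp add: tens_scale_def scM_zero_left)
qed

definition klinear_tens :: "('h \<Rightarrow> ('m \<times> 'n) list) \<Rightarrow> bool" where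
  "klinear_tens f \<longleftrightarrow>
     (\<forall>a b. f (a + b) \<simeq> f a @ f b) \<and> (\<forall>c a. f (scH c a) \<simeq> tens_scale scM c (f a))"

definition klinear_M :: "('h \<Rightarrow> 'm) \<Rightarrow> bool" where
  "klinear_M f \<longleftrightarrow> (\<forall>a b. f (a + b) = f a + f b) \<and> (\<forall>c a. f (scH c a) = scM c (f a))"

definition klinear_N :: "('h \<Rightarrow> 'n) \<Rightarrow> bool" where
  "klinear_N f \<longleftrightarrow> (\<forall>a b. f (a + b) = f a + f b) \<and> (\<forall>c a. f (scH c a) = scN c (f a))"

definition klinear_H :: "('h \<Rightarrow> 'h) \<Rightarrow> bool" where
  "klinear_H f \<longleftrightarrow> (\<forall>a b. f (a + b) = f a + f b) \<and> (\<forall>c a. f (scH c a) = scH c (f a))"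

lemma klinear_tensD:
  assumes "klinear_tens f"
  shows klinear_tens_add: "f (a + b) \<simeq> f a @ f b"
    and klinear_tens_scale: "f (scH c a) \<simeq> tens_scale scM c (f a)"
  using assms by (simp_all add: klinear_tens_def)

lemma klinear_tens_zero: "klinear_tens f \<Longrightarrow> f 0 \<simeq> []"
  using klinear_tens_scale[of f 0 0] tens_scale_zero[of "f 0"] tr_trans
  by (fastforce simp: scH_zero_left)

lemma klinear_tens_sum_list: "klinear_tens f \<Longrightarrow> f (sum_list xs) \<simeq> concat (map f xs)"
proof (induction xs)
  case Nil then show ?case by (simp add: klinear_tens_zero)
next
  case (Cons x xs)
  then show ?case
    using klinear_tens_add[OF Cons(2)] tens_rel_append_left tr_trans by fastforce
qed

lemma klinear_tens_comp: "klinear_tens f \<Longrightarrow> klinear_H p \<Longrightarrow> klinear_tens (\<lambda>x. f (p x))"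
  unfolding klinear_tens_def klinear_H_def by simp

lemma klinear_tens_single_left: "klinear_M f \<Longrightarrow> klinear_tens (\<lambda>x. [(f x, y)])"
  unfolding klinear_tens_def klinear_M_def by (auto simp: tens_scale_def intro: tr_addL tr_refl)

lemma klinear_tens_single_right: "klinear_N g \<Longrightarrow> klinear_tens (\<lambda>x. [(y, g x)])"
  unfolding klinear_tens_def klinear_N_def
  by (auto simp: tens_scale_def intro: tr_addR tr_sym[OF tr_scal])

lemma klinear_H_id: "klinear_H (\<lambda>x. x)"
  and klinear_H_mult_left: "klinear_H (\<lambda>x. c * x)"
  and klinear_H_mult_right: "klinear_H (\<lambda>x. x * c)"
  and klinear_H_antipode: "klinear_H S"
  by (simp_all add: klinear_H_def distrib_left distrib_right scH_mult_left[symmetric]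
      scH_mult_right[symmetric] antipode_add antipode_scale)

lemma klinear_H_comp: "klinear_H f \<Longrightarrow> klinear_H g \<Longrightarrow> klinear_H (\<lambda>x. f (g x))"
  by (simp add: klinear_H_def)

lemma klinear_H_mult_antipode: "klinear_H (\<lambda>x. c * S x)"
  and klinear_H_antipode_mult: "klinear_H (\<lambda>x. S x * c)"
  by (rule klinear_H_comp[OF klinear_H_mult_left klinear_H_antipode]
      klinear_H_comp[OF klinear_H_mult_right klinear_H_antipode])+

text \<open>\<open>sweedler h f\<close> is the Sweedler sum \<open>\<Sum> f h\<^sub>1 h\<^sub>2\<close> over the chosen representative of \<open>\<Delta>(h)\<close>.\<close>

definition sweedler :: "'h \<Rightarrow> ('h \<Rightarrow> 'h \<Rightarrow> ('m \<times> 'n) list) \<Rightarrow> ('m \<times> 'n) list" where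
  "sweedler h f = concat (map (\<lambda>(a, b). f a b) (delta h))"

lemma sweedler_Nil: "sweedler h (\<lambda>a b. []) = []"
  unfolding sweedler_def by (induction "delta h") auto

lemma sweedler_cong: "(\<And>a b. f a b \<simeq> g a b) \<Longrightarrow> sweedler h f \<simeq> sweedler h g"
  unfolding sweedler_def by (rule tens_rel_concat_map_cong) auto

lemma sweedler_append: "sweedler h (\<lambda>a b. f a b @ g a b) \<simeq> sweedler h f @ sweedler h g"
  unfolding sweedler_def
  using tens_rel_concat_map_append[of scM scN "\<lambda>x. f (fst x) (snd x)" "\<lambda>x. g (fst x) (snd x)"]
  by (simp add: split_def)

lemma sweedler_scale: "sweedler h (\<lambda>a b. tens_scale scM c (f a b)) = tens_scale scM c (sweedler h f)"
  unfolding sweedler_def by (simp add: tens_scale_concat split_def comp_def)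

lemma sweedler_swap:
  "sweedler x (\<lambda>a b. sweedler y (f a b)) \<simeq> sweedler y (\<lambda>c d. sweedler x (\<lambda>a b. f a b c d))"
  unfolding sweedler_def
  using tens_rel_concat_map_swap[of scM scN "\<lambda>p q. f (fst p) (snd p) (fst q) (snd q)" "delta y" "delta x"]
  by (simp add: split_def)

lemma sweedler_concat_map:
  "sweedler k (\<lambda>a b. concat (map (f a b) xs)) \<simeq> concat (map (\<lambda>p. sweedler k (\<lambda>a b. f a b p)) xs)"
  unfolding sweedler_def
  using tens_rel_concat_map_swap[of scM scN "\<lambda>q p. f (fst q) (snd q) p" xs "delta k"]
  by (simp add: split_def)

lemma sweedler_collect_left:
  "sweedler k (\<lambda>a b. [(X a b, n)]) \<simeq> [(vsum (+) 0 (map (\<lambda>(a, b). X a b) (delta k)), n)]"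
  unfolding sweedler_def vsum_def using tens_rel_collect_left[of scM scN "\<lambda>(a, b). X a b" n "delta k"]
  by (simp add: split_def)

lemma sweedler_transfer:
  assumes "\<And>a. klinear_tens (g a)" "\<And>b. klinear_tens (\<lambda>a. g a b)" "tens_rel scH scH u v"
  shows "concat (map (\<lambda>(a, b). g a b) u) \<simeq> concat (map (\<lambda>(a, b). g a b) v)"
proof (rule tens_rel_bilinear_map[OF assms(3)])
  show "g (a + a') b \<simeq> g a b @ g a' b" for a a' b by (rule klinear_tens_add[OF assms(2)])
  show "g a (b + b') \<simeq> g a b @ g a b'" for a b b' by (rule klinear_tens_add[OF assms(1)])
  show "g 0 b \<simeq> []" for b by (rule klinear_tens_zero[OF assms(2)])
  show "g (scH c a) b \<simeq> g a (scH c b)" for c a b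
    using klinear_tens_scale[OF assms(2)] klinear_tens_scale[OF assms(1)] tr_trans tr_sym by metis
qed

lemma sweedler_add:
  "(\<And>a. klinear_tens (g a)) \<Longrightarrow> (\<And>b. klinear_tens (\<lambda>a. g a b)) \<Longrightarrow>
   sweedler (x + y) g \<simeq> sweedler x g @ sweedler y g"
  unfolding sweedler_def using sweedler_transfer[OF _ _ delta_add] by simp

lemma sweedler_scaleH:
  assumes g1: "\<And>a. klinear_tens (g a)" and g2: "\<And>b. klinear_tens (\<lambda>a. g a b)"
  shows "sweedler (scH c x) g \<simeq> tens_scale scM c (sweedler x g)"
proof -
  have "sweedler (scH c x) g \<simeq> concat (map (\<lambda>(a, b). g a b) (tens_scale scH c (delta x)))"
    unfolding sweedler_def by (rule sweedler_transfer[OF g1 g2 delta_scale])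
  also have "concat (map (\<lambda>(a, b). g a b) (tens_scale scH c (delta x))) =
             sweedler x (\<lambda>a b. g (scH c a) b)"
    unfolding sweedler_def tens_scale_def by (simp add: split_def comp_def)
  also have "\<dots> \<simeq> sweedler x (\<lambda>a b. tens_scale scM c (g a b))"
    by (rule sweedler_cong, rule klinear_tens_scale[OF g2])
  finally show ?thesis by (simp add: sweedler_scale)
qed

lemma klinear_tens_sweedler:
  "klinear_H p \<Longrightarrow> (\<And>a. klinear_tens (g a)) \<Longrightarrow> (\<And>b. klinear_tens (\<lambda>a. g a b)) \<Longrightarrow>
   klinear_tens (\<lambda>x. sweedler (p x) g)"
  unfolding klinear_tens_def[of "\<lambda>x. sweedler (p x) g"] klinear_H_def
  using sweedler_add[of g] sweedler_scaleH[of g] by auto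

lemma klinear_tens_sweedler_param:
  assumes g: "\<And>a b. klinear_tens (\<lambda>r. g r a b)"
  shows "klinear_tens (\<lambda>r. sweedler h (g r))"
  unfolding klinear_tens_def
proof (intro conjI allI)
  fix x y
  have "sweedler h (g (x + y)) \<simeq> sweedler h (\<lambda>a b. g x a b @ g y a b)"
    by (rule sweedler_cong, rule klinear_tens_add[OF g])
  also have "\<dots> \<simeq> sweedler h (g x) @ sweedler h (g y)" by (rule sweedler_append)
  finally show "sweedler h (g (x + y)) \<simeq> sweedler h (g x) @ sweedler h (g y)" .
next
  fix c x
  have "sweedler h (g (scH c x)) \<simeq> sweedler h (\<lambda>a b. tens_scale scM c (g x a b))"
    by (rule sweedler_cong, rule klinear_tens_scale[OF g])
  then show "sweedler h (g (scH c x)) \<simeq> tens_scale scM c (sweedler h (g x))"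
    by (simp add: sweedler_scale)
qed

lemma sweedler_coassoc:
  assumes "\<And>b e. klinear_tens (\<lambda>a. g a b e)" "\<And>a e. klinear_tens (\<lambda>b. g a b e)"
    and "\<And>a b. klinear_tens (\<lambda>e. g a b e)"
  shows "sweedler h (\<lambda>a b. sweedler a (\<lambda>a1 a2. g a1 a2 b))
       \<simeq> sweedler h (\<lambda>a b. sweedler b (\<lambda>b1 b2. g a b1 b2))"
proof -
  have "concat (map (\<lambda>(a, b, e). g a b e)
          (concat (map (\<lambda>(a, b). map (\<lambda>(a1, a2). (a1, a2, b)) (delta a)) (delta h))))
      \<simeq> concat (map (\<lambda>(a, b, e). g a b e)
          (concat (map (\<lambda>(a, b). map (\<lambda>(b1, b2). (a, b1, b2)) (delta b)) (delta h))))"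
  proof (rule tens3_rel_trilinear_map[OF delta_coassoc])
    show "g (a + a') b e \<simeq> g a b e @ g a' b e" for a a' b e by (rule klinear_tens_add[OF assms(1)])
    show "g a (b + b') e \<simeq> g a b e @ g a b' e" for a b b' e by (rule klinear_tens_add[OF assms(2)])
    show "g a b (e + e') \<simeq> g a b e @ g a b e'" for a b e e' by (rule klinear_tens_add[OF assms(3)])
    show "g 0 b e \<simeq> []" for b e by (rule klinear_tens_zero[OF assms(1)])
    show "g (scH c a) b e \<simeq> g a (scH c b) e" for c a b e
      using klinear_tens_scale[OF assms(1)] klinear_tens_scale[OF assms(2)] tr_trans tr_sym by metis
    show "g (scH c a) b e \<simeq> g a b (scH c e)" for c a b e
      using klinear_tens_scale[OF assms(1)] klinear_tens_scale[OF assms(3)] tr_trans tr_sym by metis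
  qed
  then show ?thesis
    unfolding sweedler_def by (simp add: map_concat split_def comp_def concat_concat)
qed

lemma sweedler_mult:
  assumes "\<And>a. klinear_tens (f a)" "\<And>b. klinear_tens (\<lambda>a. f a b)"
  shows "sweedler (g * h) f \<simeq> sweedler g (\<lambda>a b. sweedler h (\<lambda>c d. f (a * c) (b * d)))"
proof -
  have "sweedler (g * h) f \<simeq> concat (map (\<lambda>(a, b). f a b)
        (concat (map (\<lambda>(a, b). map (\<lambda>(c, d). (a * c, b * d)) (delta h)) (delta g))))"
    unfolding sweedler_def by (rule sweedler_transfer[OF assms delta_mult])
  then show ?thesis
    unfolding sweedler_def by (simp add: map_concat split_def comp_def concat_concat)
qed

lemma sweedler_one:
  "(\<And>a. klinear_tens (f a)) \<Longrightarrow> (\<And>b. klinear_tens (\<lambda>a. f a b)) \<Longrightarrow> sweedler 1 f \<simeq> f 1 1"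
  using sweedler_transfer[OF _ _ delta_one] unfolding sweedler_def by simp

lemma sweedler_counit_left: "klinear_tens f \<Longrightarrow> sweedler h (\<lambda>a b. f (scH (eps a) b)) \<simeq> f h"
  using klinear_tens_sum_list[of f "map (\<lambda>(a, b). scH (eps a) b) (delta h)"]
  unfolding counit_left sweedler_def by (simp add: split_def comp_def tr_sym)

lemma sweedler_counit_right: "klinear_tens f \<Longrightarrow> sweedler h (\<lambda>a b. f (scH (eps b) a)) \<simeq> f h"
  using klinear_tens_sum_list[of f "map (\<lambda>(a, b). scH (eps b) a) (delta h)"]
  unfolding counit_right sweedler_def by (simp add: split_def comp_def tr_sym)

lemma sweedler_antipode_left:
  "klinear_tens f \<Longrightarrow> sweedler h (\<lambda>a b. f (S a * b)) \<simeq> f (scH (eps h) 1)"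
  using klinear_tens_sum_list[of f "map (\<lambda>(a, b). S a * b) (delta h)"]
  unfolding antipode_left sweedler_def by (simp add: split_def comp_def tr_sym)

lemma sweedler_antipode_right:
  "klinear_tens f \<Longrightarrow> sweedler h (\<lambda>a b. f (a * S b)) \<simeq> f (scH (eps h) 1)"
  using klinear_tens_sum_list[of f "map (\<lambda>(a, b). a * S b) (delta h)"]
  unfolding antipode_right sweedler_def by (simp add: split_def comp_def tr_sym)

section \<open>Identities of the antipode\<close>

lemma sweedler_antipode_collapse:
  assumes G1: "\<And>b e. klinear_tens (\<lambda>a. G a b e)" and G2: "\<And>a e. klinear_tens (\<lambda>b. G a b e)"
    and G3: "\<And>a b. klinear_tens (\<lambda>e. G a b e)"
  shows "sweedler k (\<lambda>a b. sweedler a (\<lambda>a1 a2. sweedler b (\<lambda>b1 b2. G a1 (a2 * S b1) b2)))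
       \<simeq> sweedler k (\<lambda>a b. G a 1 b)"
proof -
  have L: "klinear_tens (\<lambda>r. G a (r * S c) d)" for a c d
    by (rule klinear_tens_comp[OF G2 klinear_H_mult_right])
  have L': "klinear_tens (\<lambda>r. G a (c * S r) d)" for a c d
    by (rule klinear_tens_comp[OF G2 klinear_H_mult_antipode])
  have "sweedler k (\<lambda>a b. sweedler a (\<lambda>a1 a2. sweedler b (\<lambda>b1 b2. G a1 (a2 * S b1) b2)))
      \<simeq> sweedler k (\<lambda>a b. sweedler b (\<lambda>b1 b2. sweedler b2 (\<lambda>c d. G a (b1 * S c) d)))"
  proof (rule sweedler_coassoc[where g="\<lambda>a1 a2 b. sweedler b (\<lambda>b1 b2. G a1 (a2 * S b1) b2)"])
    show "klinear_tens (\<lambda>a. sweedler b (\<lambda>b1 b2. G a (e * S b1) b2))" for b e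
      by (rule klinear_tens_sweedler_param, rule G1)
    show "klinear_tens (\<lambda>x. sweedler b (\<lambda>b1 b2. G a (x * S b1) b2))" for a b
      by (rule klinear_tens_sweedler_param, rule L)
    show "klinear_tens (\<lambda>e. sweedler e (\<lambda>b1 b2. G a (b * S b1) b2))" for a b
      by (rule klinear_tens_sweedler[OF klinear_H_id G3 L'])
  qed
  also have "\<dots> \<simeq> sweedler k (\<lambda>a b. sweedler b (\<lambda>x d. sweedler x (\<lambda>b1 c. G a (b1 * S c) d)))"
    by (rule sweedler_cong, rule tr_sym,
        rule sweedler_coassoc[where g="\<lambda>b1 c d. G _ (b1 * S c) d"], rule L, rule L', rule G3)
  also have "\<dots> \<simeq> sweedler k (\<lambda>a b. sweedler b (\<lambda>x d. G a 1 (scH (eps x) d)))"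
  proof (rule sweedler_cong, rule sweedler_cong)
    fix a b x d
    have "sweedler x (\<lambda>b1 c. G a (b1 * S c) d) \<simeq> G a (scH (eps x) 1) d"
      by (rule sweedler_antipode_right, rule G2)
    also have "\<dots> \<simeq> tens_scale scM (eps x) (G a 1 d)" by (rule klinear_tens_scale, rule G2)
    also have "\<dots> \<simeq> G a 1 (scH (eps x) d)" by (rule tr_sym, rule klinear_tens_scale, rule G3)
    finally show "sweedler x (\<lambda>b1 c. G a (b1 * S c) d) \<simeq> G a 1 (scH (eps x) d)" .
  qed
  also have "\<dots> \<simeq> sweedler k (\<lambda>a b. G a 1 b)"
    by (rule sweedler_cong, rule sweedler_counit_left, rule G3)
  finally show ?thesis .
qed

lemma sweedler_counit_expand:
  assumes G1: "\<And>v. klinear_tens (\<lambda>u. G u v)" and G2: "\<And>u. klinear_tens (G u)"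
  shows "tens_scale scM (eps b) (G 1 1)
       \<simeq> sweedler b (\<lambda>x y. sweedler x (\<lambda>p q. sweedler y (\<lambda>r s. G (p * S s) (q * S r))))"
proof -
  have "sweedler b (\<lambda>x y. sweedler x (\<lambda>p q. sweedler y (\<lambda>r s. G (p * S s) (q * S r))))
      \<simeq> sweedler b (\<lambda>x y. G (x * S y) 1)"
    using sweedler_antipode_collapse[where G="\<lambda>a1 v b2. G (a1 * S b2) v"]
    by (simp add: G2 klinear_tens_comp[OF G1] klinear_H_mult_right
        klinear_H_mult_antipode)
  also have "\<dots> \<simeq> G (scH (eps b) 1) 1" by (rule sweedler_antipode_right, rule G1)
  also have "\<dots> \<simeq> tens_scale scM (eps b) (G 1 1)" by (rule klinear_tens_scale[OF G1])
  finally show ?thesis by (rule tr_sym)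
qed

lemma sweedler_antipode_expand:
  assumes F1: "\<And>b. klinear_tens (\<lambda>a. F a b)" and F2: "\<And>a. klinear_tens (F a)"
  shows "sweedler (S h) F \<simeq> sweedler h (\<lambda>a b. sweedler b (\<lambda>x y. sweedler y (\<lambda>r s.
           sweedler (S a * x) (\<lambda>d1 d2. F (d1 * S s) (d2 * S r)))))"
proof -
  define G where "G a u v = sweedler (S a) (\<lambda>c1 c2. F (c1 * u) (c2 * v))" for a u v
  have F1': "klinear_tens (\<lambda>u. F (c * u) v)" "klinear_tens (\<lambda>u. F (u * c) v)" for c v
    by (rule klinear_tens_comp[OF F1 klinear_H_mult_left] klinear_tens_comp[OF F1 klinear_H_mult_right])+
  have F2': "klinear_tens (\<lambda>v. F u (c * v))" "klinear_tens (\<lambda>v. F u (v * c))" for c u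
    by (rule klinear_tens_comp[OF F2 klinear_H_mult_left] klinear_tens_comp[OF F2 klinear_H_mult_right])+
  have G1: "klinear_tens (\<lambda>u. G a u v)" for a v
    unfolding G_def by (rule klinear_tens_sweedler_param, rule F1')
  have G2: "klinear_tens (G a u)" for a u
    unfolding G_def by (rule klinear_tens_sweedler_param, rule F2')
  have FS: "klinear_tens (\<lambda>x. sweedler (S x) F)"
    by (rule klinear_tens_sweedler[OF klinear_H_antipode F2 F1])
  have "sweedler (S h) F \<simeq> sweedler h (\<lambda>a b. sweedler (S (scH (eps b) a)) F)"
    by (rule tr_sym, rule sweedler_counit_right[OF FS])
  also have "\<dots> \<simeq> sweedler h (\<lambda>a b. tens_scale scM (eps b) (G a 1 1))"
    unfolding G_def by (simp add: sweedler_cong klinear_tens_scale[OF FS])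
  also have "\<dots> \<simeq> sweedler h (\<lambda>a b.
      sweedler b (\<lambda>x y. sweedler x (\<lambda>p q. sweedler y (\<lambda>r s. G a (p * S s) (q * S r)))))"
    by (rule sweedler_cong, rule sweedler_counit_expand[OF G1 G2])
  also have "\<dots> \<simeq> sweedler h (\<lambda>a b. sweedler b (\<lambda>x y. sweedler y (\<lambda>r s.
      sweedler (S a * x) (\<lambda>d1 d2. F (d1 * S s) (d2 * S r)))))"
  proof (rule sweedler_cong, rule sweedler_cong)
    fix a b x y
    have "sweedler x (\<lambda>p q. sweedler y (\<lambda>r s. G a (p * S s) (q * S r)))
        \<simeq> sweedler y (\<lambda>r s. sweedler x (\<lambda>p q. G a (p * S s) (q * S r)))"
      by (rule sweedler_swap)
    also have "\<dots> \<simeq> sweedler y (\<lambda>r s. sweedler (S a) (\<lambda>c1 c2.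
        sweedler x (\<lambda>p q. (\<lambda>u v. F (u * S s) (v * S r)) (c1 * p) (c2 * q))))"
      unfolding G_def by (rule sweedler_cong, simp add: mult.assoc sweedler_swap)
    also have "\<dots> \<simeq> sweedler y (\<lambda>r s. sweedler (S a * x) (\<lambda>d1 d2. F (d1 * S s) (d2 * S r)))"
      by (rule sweedler_cong, rule tr_sym, rule sweedler_mult, rule F2', rule F1')
    finally show "sweedler x (\<lambda>p q. sweedler y (\<lambda>r s. G a (p * S s) (q * S r)))
        \<simeq> sweedler y (\<lambda>r s. sweedler (S a * x) (\<lambda>d1 d2. F (d1 * S s) (d2 * S r)))" .
  qed
  finally show ?thesis .
qed

lemma sweedler_antipode:
  assumes F1: "\<And>b. klinear_tens (\<lambda>a. F a b)" and F2: "\<And>a. klinear_tens (F a)"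
  shows "sweedler (S h) F \<simeq> sweedler h (\<lambda>a b. F (S b) (S a))"
proof -
  define \<Phi> where "\<Phi> a x y = sweedler y (\<lambda>r s. sweedler (S a * x) (\<lambda>d1 d2. F (d1 * S s) (d2 * S r)))"
    for a x y
  have F': "klinear_tens (\<lambda>d1. F (d1 * S s) v)" "klinear_tens (\<lambda>d2. F u (d2 * S r))"
    "klinear_tens (\<lambda>s. F (S s) v)" "klinear_tens (\<lambda>r. F u (S r))" for s r u v
    by (rule klinear_tens_comp[OF F1 klinear_H_mult_right] klinear_tens_comp[OF F2 klinear_H_mult_right]
        klinear_tens_comp[OF F1 klinear_H_antipode] klinear_tens_comp[OF F2 klinear_H_antipode])+
  have \<Phi>_lin1: "klinear_tens (\<lambda>a. \<Phi> a x y)" for x y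
    unfolding \<Phi>_def by (intro klinear_tens_sweedler_param klinear_tens_sweedler[OF klinear_H_antipode_mult] F')
  have \<Phi>_lin2: "klinear_tens (\<lambda>x. \<Phi> a x y)" for a y
    unfolding \<Phi>_def by (intro klinear_tens_sweedler_param klinear_tens_sweedler[OF klinear_H_mult_left] F')
  have \<Phi>_lin3: "klinear_tens (\<Phi> a x)" for a x
    unfolding \<Phi>_def
    by (intro klinear_tens_sweedler[OF klinear_H_id] klinear_tens_sweedler_param
        klinear_tens_comp[OF F1 klinear_H_mult_antipode] klinear_tens_comp[OF F2 klinear_H_mult_antipode])
  have "sweedler (S h) F \<simeq> sweedler h (\<lambda>a b. sweedler b (\<lambda>x y. \<Phi> a x y))"
    unfolding \<Phi>_def by (rule sweedler_antipode_expand[OF F1 F2])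
  also have "\<dots> \<simeq> sweedler h (\<lambda>z y. sweedler z (\<lambda>a x. \<Phi> a x y))"
    by (rule tr_sym, rule sweedler_coassoc[OF \<Phi>_lin1 \<Phi>_lin2 \<Phi>_lin3])
  also have "\<dots> \<simeq> sweedler h (\<lambda>z y. tens_scale scM (eps z) (sweedler y (\<lambda>r s. F (S s) (S r))))"
  proof (rule sweedler_cong)
    fix z y
    have "sweedler z (\<lambda>a x. \<Phi> a x y)
        \<simeq> sweedler y (\<lambda>r s. sweedler z (\<lambda>a x. sweedler (S a * x) (\<lambda>d1 d2. F (d1 * S s) (d2 * S r))))"
      unfolding \<Phi>_def by (rule sweedler_swap)
    also have "\<dots> \<simeq> sweedler y (\<lambda>r s. tens_scale scM (eps z) (F (S s) (S r)))"
    proof (rule sweedler_cong)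
      fix r s
      have L: "klinear_tens (\<lambda>t. sweedler t (\<lambda>d1 d2. F (d1 * S s) (d2 * S r)))"
        by (rule klinear_tens_sweedler[OF klinear_H_id F'(2) F'(1)])
      have "sweedler z (\<lambda>a x. sweedler (S a * x) (\<lambda>d1 d2. F (d1 * S s) (d2 * S r)))
          \<simeq> sweedler (scH (eps z) 1) (\<lambda>d1 d2. F (d1 * S s) (d2 * S r))"
        by (rule sweedler_antipode_left[OF L])
      also have "\<dots> \<simeq> tens_scale scM (eps z) (sweedler 1 (\<lambda>d1 d2. F (d1 * S s) (d2 * S r)))"
        by (rule klinear_tens_scale[OF L])
      also have "\<dots> \<simeq> tens_scale scM (eps z) (F (1 * S s) (1 * S r))"
        by (rule tens_scale_cong, rule sweedler_one, rule F'(2), rule F'(1))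
      finally show "sweedler z (\<lambda>a x. sweedler (S a * x) (\<lambda>d1 d2. F (d1 * S s) (d2 * S r)))
          \<simeq> tens_scale scM (eps z) (F (S s) (S r))" by simp
    qed
    finally show "sweedler z (\<lambda>a x. \<Phi> a x y)
        \<simeq> tens_scale scM (eps z) (sweedler y (\<lambda>r s. F (S s) (S r)))" by (simp add: sweedler_scale)
  qed
  also have "\<dots> \<simeq> sweedler h (\<lambda>z y. sweedler (scH (eps z) y) (\<lambda>r s. F (S s) (S r)))"
    by (rule sweedler_cong, rule tr_sym, rule klinear_tens_scale,
        rule klinear_tens_sweedler[OF klinear_H_id F'(3) F'(4)])
  also have "\<dots> \<simeq> sweedler h (\<lambda>r s. F (S s) (S r))"
    by (rule sweedler_counit_left, rule klinear_tens_sweedler[OF klinear_H_id F'(3) F'(4)])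
  finally show ?thesis .
qed

end

section \<open>The partial action on \<open>M \<otimes> N\<close>\<close>

locale partial_tensor_module = hopf_tensor_target scH delta eps S scM scN
  for scH :: "'k::field \<Rightarrow> 'h::ring_1 \<Rightarrow> 'h"
    and delta :: "'h \<Rightarrow> ('h \<times> 'h) list"
    and eps :: "'h \<Rightarrow> 'k"
    and S :: "'h \<Rightarrow> 'h"
    and scM :: "'k \<Rightarrow> 'm::ab_group_add \<Rightarrow> 'm"
    and scN :: "'k \<Rightarrow> 'n::ab_group_add \<Rightarrow> 'n" +
  fixes pa :: "'h \<Rightarrow> 'm \<Rightarrow> 'm"
    and act :: "'h \<Rightarrow> 'n \<Rightarrow> 'n"
  assumes partial_M: "partial_module scH delta S (+) 0 scM (=) pa"
    and module_N: "left_module scH scN act"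
begin

text \<open>The four axioms are named after the operator word on their left-hand side,
  e.g. \<open>pa_axiom_hk1Sk2\<close> is \<open>\<pi>(h)\<pi>(k\<^sub>1)\<pi>(S k\<^sub>2) = \<pi>(h k\<^sub>1)\<pi>(S k\<^sub>2)\<close>.\<close>

lemma pa_add_right: "pa h (x + y) = pa h x + pa h y"
  and pa_scale_right: "pa h (scM c x) = scM c (pa h x)"
  and pa_add_left: "pa (a + b) x = pa a x + pa b x"
  and pa_scale_left: "pa (scH c a) x = scM c (pa a x)"
  and pa_one: "pa 1 x = x"
  and pa_axiom_hk1Sk2: "vsum (+) 0 (map (\<lambda>(a, b). pa h (pa a (pa (S b) x))) (delta k)) =
            vsum (+) 0 (map (\<lambda>(a, b). pa (h * a) (pa (S b) x)) (delta k))"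
  and pa_axiom_h1Sh2k: "vsum (+) 0 (map (\<lambda>(a, b). pa a (pa (S b) (pa k x))) (delta h)) =
            vsum (+) 0 (map (\<lambda>(a, b). pa a (pa (S b * k) x)) (delta h))"
  and pa_axiom_hSk1k2: "vsum (+) 0 (map (\<lambda>(a, b). pa h (pa (S a) (pa b x))) (delta k)) =
            vsum (+) 0 (map (\<lambda>(a, b). pa (h * S a) (pa b x)) (delta k))"
  and pa_axiom_Sh1h2k: "vsum (+) 0 (map (\<lambda>(a, b). pa (S a) (pa b (pa k x))) (delta h)) =
            vsum (+) 0 (map (\<lambda>(a, b). pa (S a) (pa (b * k) x)) (delta h))"
  using partial_M unfolding partial_module_def by (elim conjE; fast)+

lemma pa_zero_right: "pa a 0 = 0"
  using pa_add_right[of a 0 0] by simp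

lemma act_add_left: "act (a + b) n = act a n + act b n"
  and act_scale_left: "act (scH c a) n = scN c (act a n)"
  and act_add_right: "act h (n + n') = act h n + act h n'"
  and act_scale_right: "act h (scN c n) = scN c (act h n)"
  and act_one: "act 1 n = n"
  and act_mult: "act (a * b) n = act a (act b n)"
  using module_N unfolding left_module_def by (elim conjE; fast)+

lemmas klinear_intros = klinear_tens_sweedler_param klinear_tens_sweedler
  klinear_tens_single_left klinear_tens_single_right

lemmas klinear_simps = klinear_M_def klinear_N_def klinear_H_def
  act_add_left act_scale_left act_add_right act_scale_right
  pa_add_left pa_scale_left pa_add_right pa_scale_right distrib_left distrib_right
  scH_mult_left[symmetric] scH_mult_right[symmetric] antipode_add antipode_scale

abbreviation pa_tens :: "'h \<Rightarrow> ('m \<times> 'n) list \<Rightarrow> ('m \<times> 'n) list"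
  where "pa_tens \<equiv> tens_act delta pa act"

lemma pa_tens_single: "pa_tens h [(m, n)] = sweedler h (\<lambda>a b. [(pa a m, act b n)])"
  by (simp add: tens_act_def sweedler_def split_def)

lemma pa_tens_append: "pa_tens h (xs @ ys) = pa_tens h xs @ pa_tens h ys"
  by (simp add: tens_act_def)

lemma pa_tens_concat: "pa_tens h (concat L) = concat (map (pa_tens h) L)"
  by (induction L) (simp_all add: pa_tens_append tens_act_def)

lemma pa_tens_sweedler: "pa_tens h (sweedler x g) = sweedler x (\<lambda>a b. pa_tens h (g a b))"
  unfolding sweedler_def by (simp add: pa_tens_concat split_def comp_def)

lemma pa_tens_eq_concat_singles: "pa_tens h xs = concat (map (\<lambda>p. pa_tens h [p]) xs)"
  by (simp add: tens_act_def)

lemma pa_tens_cong: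
  assumes "xs \<simeq> ys"
  shows "pa_tens h xs \<simeq> pa_tens h ys"
proof -
  have "concat (map (\<lambda>(m, n). pa_tens h [(m, n)]) xs) \<simeq> concat (map (\<lambda>(m, n). pa_tens h [(m, n)]) ys)"
  proof (rule tens_rel_bilinear_map[OF assms])
    show "pa_tens h [(a + a', b)] \<simeq> pa_tens h [(a, b)] @ pa_tens h [(a', b)]" for a a' b
      unfolding pa_tens_single pa_add_right
      by (rule tr_trans[OF sweedler_cong sweedler_append]) (simp add: tr_addL)
    show "pa_tens h [(a, b + b')] \<simeq> pa_tens h [(a, b)] @ pa_tens h [(a, b')]" for a b b'
      unfolding pa_tens_single act_add_right
      by (rule tr_trans[OF sweedler_cong sweedler_append]) (simp add: tr_addR)
    show "pa_tens h [(0, b)] \<simeq> []" for b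
    proof -
      have "pa_tens h [(0, b)] \<simeq> sweedler h (\<lambda>x y. [])"
        unfolding pa_tens_single pa_zero_right by (rule sweedler_cong, rule tr_zero)
      then show ?thesis by (simp add: sweedler_Nil)
    qed
    show "pa_tens h [(scM c a, b)] \<simeq> pa_tens h [(a, scN c b)]" for c a b
      unfolding pa_tens_single pa_scale_right act_scale_right by (rule sweedler_cong, rule tr_scal)
  qed
  then show ?thesis by (simp add: tens_act_def)
qed

lemma pa_tens_scale_right: "pa_tens h (tens_scale scM c xs) = tens_scale scM c (pa_tens h xs)"
  by (simp add: tens_act_def tens_scale_def pa_scale_right split_def map_concat comp_def)

lemma pa_tens_add_left: "pa_tens (a + b) xs \<simeq> pa_tens a xs @ pa_tens b xs"
proof -
  have single: "pa_tens (a + b) [p] \<simeq> pa_tens a [p] @ pa_tens b [p]" for p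
    by (cases p, simp only: pa_tens_single)
      (rule sweedler_add; (intro klinear_intros)?; simp add: klinear_simps)
  have "pa_tens (a + b) xs \<simeq> concat (map (\<lambda>p. pa_tens a [p] @ pa_tens b [p]) xs)"
    by (subst pa_tens_eq_concat_singles, rule tens_rel_concat_map_cong, rule single)
  also have "\<dots> \<simeq> pa_tens a xs @ pa_tens b xs"
    by (subst (2 3) pa_tens_eq_concat_singles, rule tens_rel_concat_map_append)
  finally show ?thesis .
qed

lemma pa_tens_scale_left: "pa_tens (scH c a) xs \<simeq> tens_scale scM c (pa_tens a xs)"
proof -
  have single: "pa_tens (scH c a) [p] \<simeq> tens_scale scM c (pa_tens a [p])" for p
    by (cases p, simp only: pa_tens_single)
      (rule sweedler_scaleH; (intro klinear_intros)?; simp add: klinear_simps)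
  have "pa_tens (scH c a) xs \<simeq> concat (map (\<lambda>p. tens_scale scM c (pa_tens a [p])) xs)"
    by (subst pa_tens_eq_concat_singles, rule tens_rel_concat_map_cong, rule single)
  also have "\<dots> = tens_scale scM c (pa_tens a xs)"
    by (subst (2) pa_tens_eq_concat_singles) (simp add: tens_scale_concat comp_def)
  finally show ?thesis .
qed

lemma pa_tens_one: "pa_tens 1 xs \<simeq> xs"
proof -
  have single: "pa_tens 1 [p] \<simeq> [p]" for p
  proof (cases p)
    case (Pair m n)
    have "pa_tens 1 [(m, n)] \<simeq> [(pa 1 m, act 1 n)]"
      by (simp only: pa_tens_single) (rule sweedler_one; (intro klinear_intros)?; simp add: klinear_simps)
    then show ?thesis by (simp add: Pair pa_one act_one)
  qed
  have "pa_tens 1 xs \<simeq> concat (map (\<lambda>p. [p]) xs)"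
    by (subst pa_tens_eq_concat_singles, rule tens_rel_concat_map_cong, rule single)
  then show ?thesis by simp
qed

lemma sweedler_coassoc4:
  assumes Q1: "\<And>a2 b1 b2. klinear_tens (\<lambda>x. Q x a2 b1 b2)"
    and Q2: "\<And>a1 b1 b2. klinear_tens (\<lambda>x. Q a1 x b1 b2)"
    and Q3: "\<And>a1 a2 b2. klinear_tens (\<lambda>x. Q a1 a2 x b2)"
    and Q4: "\<And>a1 a2 b1. klinear_tens (\<lambda>x. Q a1 a2 b1 x)"
  shows "sweedler k (\<lambda>a b. sweedler b (\<lambda>b1 b2. sweedler a (\<lambda>a1 a2. Q a1 a2 b1 b2)))
       \<simeq> sweedler k (\<lambda>y b2. sweedler y (\<lambda>a1 z. sweedler z (\<lambda>a2 b1. Q a1 a2 b1 b2)))"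
proof -
  have "sweedler k (\<lambda>a b. sweedler b (\<lambda>b1 b2. sweedler a (\<lambda>a1 a2. Q a1 a2 b1 b2)))
      \<simeq> sweedler k (\<lambda>y b2. sweedler y (\<lambda>a b1. sweedler a (\<lambda>a1 a2. Q a1 a2 b1 b2)))"
  proof (rule tr_sym, rule sweedler_coassoc[where g="\<lambda>a b1 b2. sweedler a (\<lambda>a1 a2. Q a1 a2 b1 b2)"])
    show "klinear_tens (\<lambda>a. sweedler a (\<lambda>a1 a2. Q a1 a2 b e))" for b e
      by (rule klinear_tens_sweedler[OF klinear_H_id Q2 Q1])
    show "klinear_tens (\<lambda>x. sweedler a (\<lambda>a1 a2. Q a1 a2 x e))" for a e
      by (rule klinear_tens_sweedler_param, rule Q3)
    show "klinear_tens (\<lambda>x. sweedler a (\<lambda>a1 a2. Q a1 a2 b x))" for a b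
      by (rule klinear_tens_sweedler_param, rule Q4)
  qed
  also have "\<dots> \<simeq> sweedler k (\<lambda>y b2. sweedler y (\<lambda>a1 z. sweedler z (\<lambda>a2 b1. Q a1 a2 b1 b2)))"
    by (rule sweedler_cong, rule sweedler_coassoc[where g="\<lambda>a1 a2 b1. Q a1 a2 b1 _"],
        rule Q1, rule Q2, rule Q3)
  finally show ?thesis .
qed

lemma sweedler_single_left_eq:
  "vsum (+) 0 (map (\<lambda>(a, b). X a b) (delta k)) = vsum (+) 0 (map (\<lambda>(a, b). Y a b) (delta k)) \<Longrightarrow>
   sweedler k (\<lambda>a b. [(X a b, n)]) \<simeq> sweedler k (\<lambda>a b. [(Y a b, n)])"
  by (rule tr_trans[OF sweedler_collect_left]) (simp only:, rule tr_sym[OF sweedler_collect_left])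

lemma pa_tens_hk1Sk2_lhs_expand:
  "sweedler k (\<lambda>a b. pa_tens h (pa_tens a (pa_tens (S b) [(m, n)])))
 \<simeq> sweedler h (\<lambda>h1 h2. sweedler k (\<lambda>a b. [(pa h1 (pa a (pa (S b) m)), act h2 n)]))"
proof -
  have "sweedler k (\<lambda>a b. pa_tens h (pa_tens a (pa_tens (S b) [(m, n)])))
      \<simeq> sweedler k (\<lambda>a b. sweedler b (\<lambda>b1 b2. sweedler a (\<lambda>a1 a2. sweedler h (\<lambda>h1 h2.
          [(pa h1 (pa a1 (pa (S b2) m)), act h2 (act a2 (act (S b1) n)))]))))"
    unfolding pa_tens_single pa_tens_sweedler
    by (rule sweedler_cong, rule sweedler_antipode; (intro klinear_intros)?; simp add: klinear_simps)
  also have "\<dots> \<simeq> sweedler k (\<lambda>a b. sweedler a (\<lambda>a1 a2. sweedler b (\<lambda>b1 b2. sweedler h (\<lambda>h1 h2.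
          [(pa h1 (pa a1 (pa (S b2) m)), act h2 (act (a2 * S b1) n))]))))"
    by (rule sweedler_cong, simp only: act_mult, rule sweedler_swap)
  also have "\<dots> \<simeq> sweedler k (\<lambda>a b. sweedler h (\<lambda>h1 h2. [(pa h1 (pa a (pa (S b) m)), act h2 (act 1 n))]))"
    by (rule sweedler_antipode_collapse[where
          G="\<lambda>u v w. sweedler h (\<lambda>h1 h2. [(pa h1 (pa u (pa (S w) m)), act h2 (act v n))])"];
        (intro klinear_intros)?; simp add: klinear_simps)
  also have "\<dots> \<simeq> sweedler h (\<lambda>h1 h2. sweedler k (\<lambda>a b. [(pa h1 (pa a (pa (S b) m)), act h2 n)]))"
    unfolding act_one by (rule sweedler_swap)
  finally show ?thesis .
qed

lemma pa_tens_hk1Sk2_rhs_expand: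
  "sweedler k (\<lambda>a b. pa_tens (h * a) (pa_tens (S b) [(m, n)]))
 \<simeq> sweedler h (\<lambda>h1 h2. sweedler k (\<lambda>a b. [(pa (h1 * a) (pa (S b) m), act h2 n)]))"
proof -
  have "sweedler k (\<lambda>a b. pa_tens (h * a) (pa_tens (S b) [(m, n)]))
      \<simeq> sweedler k (\<lambda>a b. sweedler (S b) (\<lambda>c1 c2. sweedler h (\<lambda>h1 h2. sweedler a (\<lambda>a1 a2.
          [(pa (h1 * a1) (pa c1 m), act (h2 * a2) (act c2 n))]))))"
    unfolding pa_tens_single pa_tens_sweedler
    by (rule sweedler_cong, rule sweedler_cong, rule sweedler_mult;
        (intro klinear_intros)?; simp add: klinear_simps)
  also have "\<dots> \<simeq> sweedler k (\<lambda>a b. sweedler b (\<lambda>b1 b2. sweedler h (\<lambda>h1 h2. sweedler a (\<lambda>a1 a2.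
          [(pa (h1 * a1) (pa (S b2) m), act (h2 * a2) (act (S b1) n))]))))"
    by (rule sweedler_cong, rule sweedler_antipode; (intro klinear_intros)?; simp add: klinear_simps)
  also have "\<dots> \<simeq> sweedler k (\<lambda>a b. sweedler b (\<lambda>b1 b2. sweedler a (\<lambda>a1 a2. sweedler h (\<lambda>h1 h2.
          [(pa (h1 * a1) (pa (S b2) m), act (h2 * a2) (act (S b1) n))]))))"
    by (rule sweedler_cong, rule sweedler_cong, rule sweedler_swap)
  also have "\<dots> \<simeq> sweedler k (\<lambda>a b. sweedler a (\<lambda>a1 a2. sweedler b (\<lambda>b1 b2. sweedler h (\<lambda>h1 h2.
          [(pa (h1 * a1) (pa (S b2) m), act h2 (act (a2 * S b1) n))]))))"
    by (rule sweedler_cong, simp only: act_mult mult.assoc, rule sweedler_swap)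
  also have "\<dots> \<simeq> sweedler k (\<lambda>a b. sweedler h (\<lambda>h1 h2. [(pa (h1 * a) (pa (S b) m), act h2 (act 1 n))]))"
    by (rule sweedler_antipode_collapse[where
          G="\<lambda>u v w. sweedler h (\<lambda>h1 h2. [(pa (h1 * u) (pa (S w) m), act h2 (act v n))])"];
        (intro klinear_intros)?; simp add: klinear_simps)
  also have "\<dots> \<simeq> sweedler h (\<lambda>h1 h2. sweedler k (\<lambda>a b. [(pa (h1 * a) (pa (S b) m), act h2 n)]))"
    unfolding act_one by (rule sweedler_swap)
  finally show ?thesis .
qed

lemma pa_tens_axiom_hk1Sk2_single:
  "sweedler k (\<lambda>a b. pa_tens h (pa_tens a (pa_tens (S b) [(m, n)])))
 \<simeq> sweedler k (\<lambda>a b. pa_tens (h * a) (pa_tens (S b) [(m, n)]))"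
  by (rule tr_trans[OF pa_tens_hk1Sk2_lhs_expand tr_trans[OF _ tr_sym[OF pa_tens_hk1Sk2_rhs_expand]]],
      rule sweedler_cong, rule sweedler_single_left_eq, rule pa_axiom_hk1Sk2)

lemma pa_tens_h1Sh2k_lhs_expand:
  "sweedler h (\<lambda>a b. pa_tens a (pa_tens (S b) (pa_tens k [(m, n)])))
 \<simeq> sweedler k (\<lambda>k1 k2. sweedler h (\<lambda>a b. [(pa a (pa (S b) (pa k1 m)), act k2 n)]))"
proof -
  have "sweedler h (\<lambda>a b. pa_tens a (pa_tens (S b) (pa_tens k [(m, n)])))
      \<simeq> sweedler h (\<lambda>a b. sweedler k (\<lambda>k1 k2. sweedler b (\<lambda>b1 b2. sweedler a (\<lambda>a1 a2.
          [(pa a1 (pa (S b2) (pa k1 m)), act a2 (act (S b1) (act k2 n)))]))))"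
    unfolding pa_tens_single pa_tens_sweedler
    by (rule sweedler_cong, rule sweedler_cong, rule sweedler_antipode;
        (intro klinear_intros)?; simp add: klinear_simps)
  also have "\<dots> \<simeq> sweedler k (\<lambda>k1 k2. sweedler h (\<lambda>a b. sweedler b (\<lambda>b1 b2. sweedler a (\<lambda>a1 a2.
          [(pa a1 (pa (S b2) (pa k1 m)), act a2 (act (S b1) (act k2 n)))]))))"
    by (rule sweedler_swap)
  also have "\<dots> \<simeq> sweedler k (\<lambda>k1 k2. sweedler h (\<lambda>a b. sweedler a (\<lambda>a1 a2. sweedler b (\<lambda>b1 b2.
          [(pa a1 (pa (S b2) (pa k1 m)), act (a2 * S b1) (act k2 n))]))))"
    by (rule sweedler_cong, rule sweedler_cong, simp only: act_mult, rule sweedler_swap)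
  also have "\<dots> \<simeq> sweedler k (\<lambda>k1 k2. sweedler h (\<lambda>a b.
          [(pa a (pa (S b) (pa k1 m)), act 1 (act k2 n))]))"
    by (rule sweedler_cong, rule sweedler_antipode_collapse[where
          G="\<lambda>u v w. [(pa u (pa (S w) (pa _ m)), act v (act _ n))]"];
        (intro klinear_intros)?; simp add: klinear_simps)
  finally show ?thesis by (simp only: act_one)
qed

lemma pa_tens_h1Sh2k_rhs_expand:
  "sweedler h (\<lambda>a b. pa_tens a (pa_tens (S b * k) [(m, n)]))
 \<simeq> sweedler k (\<lambda>k1 k2. sweedler h (\<lambda>a b. [(pa a (pa (S b * k1) m), act k2 n)]))"
proof -
  have "sweedler h (\<lambda>a b. pa_tens a (pa_tens (S b * k) [(m, n)]))
      \<simeq> sweedler h (\<lambda>a b. sweedler (S b) (\<lambda>c1 c2. sweedler k (\<lambda>k1 k2. sweedler a (\<lambda>a1 a2.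
          [(pa a1 (pa (c1 * k1) m), act a2 (act (c2 * k2) n))]))))"
    unfolding pa_tens_single pa_tens_sweedler
    by (rule sweedler_cong, rule sweedler_mult; (intro klinear_intros)?; simp add: klinear_simps)
  also have "\<dots> \<simeq> sweedler h (\<lambda>a b. sweedler b (\<lambda>b1 b2. sweedler k (\<lambda>k1 k2. sweedler a (\<lambda>a1 a2.
          [(pa a1 (pa (S b2 * k1) m), act a2 (act (S b1 * k2) n))]))))"
    by (rule sweedler_cong, rule sweedler_antipode; (intro klinear_intros)?; simp add: klinear_simps)
  also have "\<dots> \<simeq> sweedler h (\<lambda>a b. sweedler k (\<lambda>k1 k2. sweedler b (\<lambda>b1 b2. sweedler a (\<lambda>a1 a2.
          [(pa a1 (pa (S b2 * k1) m), act (a2 * S b1) (act k2 n))]))))"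
    by (rule sweedler_cong, simp only: act_mult, rule sweedler_swap)
  also have "\<dots> \<simeq> sweedler k (\<lambda>k1 k2. sweedler h (\<lambda>a b. sweedler a (\<lambda>a1 a2. sweedler b (\<lambda>b1 b2.
          [(pa a1 (pa (S b2 * k1) m), act (a2 * S b1) (act k2 n))]))))"
    by (rule tr_trans[OF sweedler_swap], rule sweedler_cong, rule sweedler_cong, rule sweedler_swap)
  also have "\<dots> \<simeq> sweedler k (\<lambda>k1 k2. sweedler h (\<lambda>a b.
          [(pa a (pa (S b * k1) m), act 1 (act k2 n))]))"
    by (rule sweedler_cong, rule sweedler_antipode_collapse[where
          G="\<lambda>u v w. [(pa u (pa (S w * _) m), act v (act _ n))]"];
        (intro klinear_intros)?; simp add: klinear_simps)
  finally show ?thesis by (simp only: act_one)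
qed

lemma pa_tens_axiom_h1Sh2k_single:
  "sweedler h (\<lambda>a b. pa_tens a (pa_tens (S b) (pa_tens k [(m, n)])))
 \<simeq> sweedler h (\<lambda>a b. pa_tens a (pa_tens (S b * k) [(m, n)]))"
  by (rule tr_trans[OF pa_tens_h1Sh2k_lhs_expand tr_trans[OF _ tr_sym[OF pa_tens_h1Sh2k_rhs_expand]]],
      rule sweedler_cong, rule sweedler_single_left_eq, rule pa_axiom_h1Sh2k)

lemma pa_tens_hSk1k2_lhs_expand:
  "sweedler k (\<lambda>a b. pa_tens h (pa_tens (S a) (pa_tens b [(m, n)])))
 \<simeq> sweedler k (\<lambda>y b2. sweedler y (\<lambda>a1 z. sweedler h (\<lambda>h1 h2. sweedler z (\<lambda>a2 b1.
     [(pa h1 (pa (S a2) (pa b1 m)), act h2 (act (S a1) (act b2 n)))]))))"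
proof -
  have "sweedler k (\<lambda>a b. pa_tens h (pa_tens (S a) (pa_tens b [(m, n)])))
      \<simeq> sweedler k (\<lambda>a b. sweedler b (\<lambda>b1 b2. sweedler a (\<lambda>a1 a2. sweedler h (\<lambda>h1 h2.
          [(pa h1 (pa (S a2) (pa b1 m)), act h2 (act (S a1) (act b2 n)))]))))"
    unfolding pa_tens_single pa_tens_sweedler
    by (rule sweedler_cong, rule sweedler_cong, rule sweedler_antipode;
        (intro klinear_intros)?; simp add: klinear_simps)
  also have "\<dots> \<simeq> sweedler k (\<lambda>y b2. sweedler y (\<lambda>a1 z. sweedler z (\<lambda>a2 b1. sweedler h (\<lambda>h1 h2.
          [(pa h1 (pa (S a2) (pa b1 m)), act h2 (act (S a1) (act b2 n)))]))))"
    by (rule sweedler_coassoc4; (intro klinear_intros)?; simp add: klinear_simps)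
  also have "\<dots> \<simeq> sweedler k (\<lambda>y b2. sweedler y (\<lambda>a1 z. sweedler h (\<lambda>h1 h2. sweedler z (\<lambda>a2 b1.
          [(pa h1 (pa (S a2) (pa b1 m)), act h2 (act (S a1) (act b2 n)))]))))"
    by (rule sweedler_cong, rule sweedler_cong, rule sweedler_swap)
  finally show ?thesis .
qed

lemma pa_tens_hSk1k2_rhs_expand:
  "sweedler k (\<lambda>a b. pa_tens (h * S a) (pa_tens b [(m, n)]))
 \<simeq> sweedler k (\<lambda>y b2. sweedler y (\<lambda>a1 z. sweedler h (\<lambda>h1 h2. sweedler z (\<lambda>a2 b1.
     [(pa (h1 * S a2) (pa b1 m), act h2 (act (S a1) (act b2 n)))]))))"
proof -
  have "sweedler k (\<lambda>a b. pa_tens (h * S a) (pa_tens b [(m, n)]))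
      \<simeq> sweedler k (\<lambda>a b. sweedler b (\<lambda>b1 b2. sweedler h (\<lambda>h1 h2. sweedler (S a) (\<lambda>c1 c2.
          [(pa (h1 * c1) (pa b1 m), act (h2 * c2) (act b2 n))]))))"
    unfolding pa_tens_single pa_tens_sweedler
    by (rule sweedler_cong, rule sweedler_cong, rule sweedler_mult;
        (intro klinear_intros)?; simp add: klinear_simps)
  also have "\<dots> \<simeq> sweedler k (\<lambda>a b. sweedler b (\<lambda>b1 b2. sweedler (S a) (\<lambda>c1 c2. sweedler h (\<lambda>h1 h2.
          [(pa (h1 * c1) (pa b1 m), act (h2 * c2) (act b2 n))]))))"
    by (rule sweedler_cong, rule sweedler_cong, rule sweedler_swap)
  also have "\<dots> \<simeq> sweedler k (\<lambda>a b. sweedler b (\<lambda>b1 b2. sweedler a (\<lambda>a1 a2. sweedler h (\<lambda>h1 h2.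
          [(pa (h1 * S a2) (pa b1 m), act (h2 * S a1) (act b2 n))]))))"
    by (rule sweedler_cong, rule sweedler_cong, rule sweedler_antipode;
        (intro klinear_intros)?; simp add: klinear_simps)
  also have "\<dots> \<simeq> sweedler k (\<lambda>y b2. sweedler y (\<lambda>a1 z. sweedler z (\<lambda>a2 b1. sweedler h (\<lambda>h1 h2.
          [(pa (h1 * S a2) (pa b1 m), act (h2 * S a1) (act b2 n))]))))"
    by (rule sweedler_coassoc4; (intro klinear_intros)?; simp add: klinear_simps)
  also have "\<dots> \<simeq> sweedler k (\<lambda>y b2. sweedler y (\<lambda>a1 z. sweedler h (\<lambda>h1 h2. sweedler z (\<lambda>a2 b1.
          [(pa (h1 * S a2) (pa b1 m), act h2 (act (S a1) (act b2 n)))]))))"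
    by (rule sweedler_cong, rule sweedler_cong, simp only: act_mult, rule sweedler_swap)
  finally show ?thesis .
qed

lemma pa_tens_axiom_hSk1k2_single:
  "sweedler k (\<lambda>a b. pa_tens h (pa_tens (S a) (pa_tens b [(m, n)])))
 \<simeq> sweedler k (\<lambda>a b. pa_tens (h * S a) (pa_tens b [(m, n)]))"
  by (rule tr_trans[OF pa_tens_hSk1k2_lhs_expand tr_trans[OF _ tr_sym[OF pa_tens_hSk1k2_rhs_expand]]],
      rule sweedler_cong, rule sweedler_cong, rule sweedler_cong, rule sweedler_single_left_eq, rule pa_axiom_hSk1k2)

lemma pa_tens_Sh1h2k_lhs_expand:
  "sweedler h (\<lambda>a b. pa_tens (S a) (pa_tens b (pa_tens k [(m, n)])))
 \<simeq> sweedler k (\<lambda>k1 k2. sweedler h (\<lambda>y b2. sweedler y (\<lambda>a1 z. sweedler z (\<lambda>a2 b1.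
     [(pa (S a2) (pa b1 (pa k1 m)), act (S a1) (act b2 (act k2 n)))]))))"
proof -
  have "sweedler h (\<lambda>a b. pa_tens (S a) (pa_tens b (pa_tens k [(m, n)])))
      \<simeq> sweedler h (\<lambda>a b. sweedler k (\<lambda>k1 k2. sweedler b (\<lambda>b1 b2. sweedler a (\<lambda>a1 a2.
          [(pa (S a2) (pa b1 (pa k1 m)), act (S a1) (act b2 (act k2 n)))]))))"
    unfolding pa_tens_single pa_tens_sweedler
    by (rule sweedler_cong, rule sweedler_cong, rule sweedler_cong, rule sweedler_antipode;
        (intro klinear_intros)?; simp add: klinear_simps)
  also have "\<dots> \<simeq> sweedler k (\<lambda>k1 k2. sweedler h (\<lambda>a b. sweedler b (\<lambda>b1 b2. sweedler a (\<lambda>a1 a2.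
          [(pa (S a2) (pa b1 (pa k1 m)), act (S a1) (act b2 (act k2 n)))]))))"
    by (rule sweedler_swap)
  also have "\<dots> \<simeq> sweedler k (\<lambda>k1 k2. sweedler h (\<lambda>y b2. sweedler y (\<lambda>a1 z. sweedler z (\<lambda>a2 b1.
          [(pa (S a2) (pa b1 (pa k1 m)), act (S a1) (act b2 (act k2 n)))]))))"
    by (rule sweedler_cong, rule sweedler_coassoc4; (intro klinear_intros)?; simp add: klinear_simps)
  finally show ?thesis .
qed

lemma pa_tens_Sh1h2k_rhs_expand:
  "sweedler h (\<lambda>a b. pa_tens (S a) (pa_tens (b * k) [(m, n)]))
 \<simeq> sweedler k (\<lambda>k1 k2. sweedler h (\<lambda>y b2. sweedler y (\<lambda>a1 z. sweedler z (\<lambda>a2 b1.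
     [(pa (S a2) (pa (b1 * k1) m), act (S a1) (act b2 (act k2 n)))]))))"
proof -
  have "sweedler h (\<lambda>a b. pa_tens (S a) (pa_tens (b * k) [(m, n)]))
      \<simeq> sweedler h (\<lambda>a b. sweedler b (\<lambda>b1 b2. sweedler k (\<lambda>k1 k2. sweedler (S a) (\<lambda>c1 c2.
          [(pa c1 (pa (b1 * k1) m), act c2 (act (b2 * k2) n))]))))"
    unfolding pa_tens_single pa_tens_sweedler
    by (rule sweedler_cong, rule sweedler_mult; (intro klinear_intros)?; simp add: klinear_simps)
  also have "\<dots> \<simeq> sweedler h (\<lambda>a b. sweedler b (\<lambda>b1 b2. sweedler k (\<lambda>k1 k2. sweedler a (\<lambda>a1 a2.
          [(pa (S a2) (pa (b1 * k1) m), act (S a1) (act (b2 * k2) n))]))))"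
    by (rule sweedler_cong, rule sweedler_cong, rule sweedler_cong, rule sweedler_antipode;
        (intro klinear_intros)?; simp add: klinear_simps)
  also have "\<dots> \<simeq> sweedler h (\<lambda>a b. sweedler k (\<lambda>k1 k2. sweedler b (\<lambda>b1 b2. sweedler a (\<lambda>a1 a2.
          [(pa (S a2) (pa (b1 * k1) m), act (S a1) (act b2 (act k2 n)))]))))"
    by (rule sweedler_cong, simp only: act_mult, rule sweedler_swap)
  also have "\<dots> \<simeq> sweedler k (\<lambda>k1 k2. sweedler h (\<lambda>a b. sweedler b (\<lambda>b1 b2. sweedler a (\<lambda>a1 a2.
          [(pa (S a2) (pa (b1 * k1) m), act (S a1) (act b2 (act k2 n)))]))))"
    by (rule sweedler_swap)
  also have "\<dots> \<simeq> sweedler k (\<lambda>k1 k2. sweedler h (\<lambda>y b2. sweedler y (\<lambda>a1 z. sweedler z (\<lambda>a2 b1.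
          [(pa (S a2) (pa (b1 * k1) m), act (S a1) (act b2 (act k2 n)))]))))"
    by (rule sweedler_cong, rule sweedler_coassoc4; (intro klinear_intros)?; simp add: klinear_simps)
  finally show ?thesis .
qed

lemma pa_tens_axiom_Sh1h2k_single:
  "sweedler h (\<lambda>a b. pa_tens (S a) (pa_tens b (pa_tens k [(m, n)])))
 \<simeq> sweedler h (\<lambda>a b. pa_tens (S a) (pa_tens (b * k) [(m, n)]))"
  by (rule tr_trans[OF pa_tens_Sh1h2k_lhs_expand tr_trans[OF _ tr_sym[OF pa_tens_Sh1h2k_rhs_expand]]],
      rule sweedler_cong, rule sweedler_cong, rule sweedler_cong, rule sweedler_single_left_eq, rule pa_axiom_Sh1h2k)

lemma sweedler_from_singles:
  assumes F: "\<And>a b. F a b xs = concat (map (\<lambda>p. F a b [p]) xs)"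
    and G: "\<And>a b. G a b xs = concat (map (\<lambda>p. G a b [p]) xs)"
    and singles: "\<And>m n. sweedler k (\<lambda>a b. F a b [(m, n)]) \<simeq> sweedler k (\<lambda>a b. G a b [(m, n)])"
  shows "vsum (@) [] (map (\<lambda>(a, b). F a b xs) (delta k))
       \<simeq> vsum (@) [] (map (\<lambda>(a, b). G a b xs) (delta k))"
proof -
  have vsum_concat: "vsum (@) [] L = concat L" for L :: "('m \<times> 'n) list list"
    unfolding vsum_def by (induction L) auto
  have "sweedler k (\<lambda>a b. F a b xs) \<simeq> concat (map (\<lambda>p. sweedler k (\<lambda>a b. F a b [p])) xs)"
    unfolding F by (rule sweedler_concat_map)
  also have "\<dots> \<simeq> concat (map (\<lambda>p. sweedler k (\<lambda>a b. G a b [p])) xs)"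
    by (rule tens_rel_concat_map_cong) (metis singles surj_pair)
  also have "\<dots> \<simeq> sweedler k (\<lambda>a b. G a b xs)"
    unfolding G by (rule tr_sym, rule sweedler_concat_map)
  finally show ?thesis by (simp add: vsum_concat sweedler_def)
qed

lemma pa_tens2_eq_concat_singles:
  "pa_tens h (pa_tens a xs) = concat (map (\<lambda>p. pa_tens h (pa_tens a [p])) xs)"
  by (subst pa_tens_eq_concat_singles) (simp add: pa_tens_concat comp_def)

lemma pa_tens3_eq_concat_singles:
  "pa_tens h (pa_tens a (pa_tens c xs)) = concat (map (\<lambda>p. pa_tens h (pa_tens a (pa_tens c [p]))) xs)"
  by (subst pa_tens_eq_concat_singles) (simp add: pa_tens_concat comp_def)

lemma partial_module_tens:
  "partial_module scH delta S (@) [] (tens_scale scM) (tens_rel scM scN) pa_tens"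
  unfolding partial_module_def
  by (intro conjI allI impI pa_tens_cong pa_tens_add_left pa_tens_scale_left pa_tens_one
        sweedler_from_singles[OF pa_tens3_eq_concat_singles pa_tens2_eq_concat_singles]
        pa_tens_axiom_hk1Sk2_single pa_tens_axiom_h1Sh2k_single
        pa_tens_axiom_hSk1k2_single pa_tens_axiom_Sh1h2k_single)
     (simp_all add: pa_tens_append pa_tens_scale_right tr_refl)

end

theorem mainTheorem16:
  fixes scH :: "'k::field \<Rightarrow> 'h::ring_1 \<Rightarrow> 'h"
    and delta :: "'h \<Rightarrow> ('h \<times> 'h) list"
    and eps :: "'h \<Rightarrow> 'k"
    and S :: "'h \<Rightarrow> 'h"
    and scM :: "'k \<Rightarrow> 'm::ab_group_add \<Rightarrow> 'm"
    and pa :: "'h \<Rightarrow> 'm \<Rightarrow> 'm"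
    and scN :: "'k \<Rightarrow> 'n::ab_group_add \<Rightarrow> 'n"
    and act :: "'h \<Rightarrow> 'n \<Rightarrow> 'n"
  assumes "hopf_algebra scH delta eps S"
    and "bij S"
    and "vector_space scM"
    and "partial_module scH delta S (+) 0 scM (=) pa"
    and "left_module scH scN act"
  shows "partial_module scH delta S (@) [] (tens_scale scM) (tens_rel scM scN)
           (tens_act delta pa act)"
proof -
  interpret partial_tensor_module scH delta eps S scM scN pa act
    using assms(1,3-5)
    by (simp add: partial_tensor_module_def partial_tensor_module_axioms_def hopf_tensor_target_def)
  show ?thesis by (rule partial_module_tens)
qed

end
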